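(* $\mathcal{S}^*[1-\alpha,0]\subset\mathcal{S}^*_{car}$ for all $\alpha\in[1/2,1)$, and $\mathcal{S}^*[\alpha,-\alpha]\subset\mathcal{S}^*_{car}$ for all $\alpha\in(0,1/3]$. In particular, if $f\in\mathcal{A}$ satisfies \[\left|\frac{zf'(z)}{f(z)}-1\right|<\frac12\quad\text{or}\quad\left|\frac{zf'(z)/f(z)-1}{zf'(z)/f(z)+1}\right|<\frac13\] for all $z\in\mathbb{D}$, then $f\in\mathcal{S}^*_{car}$.
   Context: $\mathbb{D}=\{z:|z|<1\}$; $\mathcal{A}$ is the class of analytic $f$ on $\mathbb{D}$ with $f(0)=0$, $f'(0)=1$. $F\prec G$ means $F=G\circ w$ for an analytic $w:\mathbb{D}\to\mathbb{D}$ with $w(0)=0$. $\mathcal{S}^*_{car}$ is the class of $f\in\mathcal{A}$ with $zf'(z)/f(z)\prec 1+z+z^2/2$; for $-1\le B<A\le1$, $\mathcal{S}^*[A,B]$ is the class of $f\in\mathcal{A}$ with $zf'(z)/f(z)\prec(1+Az)/(1+Bz)$. *)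

theory Defs
  imports "HOL-Complex_Analysis.Complex_Analysis"
begin

definition unit_disc :: "complex set" where
  "unit_disc = ball 0 1"

definition class_A :: "(complex \<Rightarrow> complex) set" where
  "class_A = {f. f holomorphic_on unit_disc \<and> f 0 = 0 \<and> deriv f 0 = 1}"

definition subordinate :: "(complex \<Rightarrow> complex) \<Rightarrow> (complex \<Rightarrow> complex) \<Rightarrow> bool" where
  "subordinate F G \<longleftrightarrow> (\<exists>w. w holomorphic_on unit_disc \<and> w ` unit_disc \<subseteq> unit_disc
      \<and> w 0 = 0 \<and> (\<forall>z\<in>unit_disc. F z = G (w z)))"

text \<open>The function z f'(z)/f(z), with its removable value 1 at z = 0
  (since f(0)=0, f'(0)=1).\<close>
definition zfq :: "(complex \<Rightarrow> complex) \<Rightarrow> complex \<Rightarrow> complex" where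
  "zfq f z = (if z = 0 then 1 else z * deriv f z / f z)"

definition S_car :: "(complex \<Rightarrow> complex) set" where
  "S_car = {f \<in> class_A. subordinate (zfq f) (\<lambda>z. 1 + z + z^2 / 2)}"

definition S_AB :: "real \<Rightarrow> real \<Rightarrow> (complex \<Rightarrow> complex) set" where
  "S_AB A B = {f \<in> class_A. subordinate (zfq f) (\<lambda>z. (1 + of_real A * z) / (1 + of_real B * z))}"

end

(* Since 1 + w + w^2/2 = ((1 + w)^2 + 1)/2, the function w = sqrt(2q - 1) - 1 inverts the
   cardioid map, and it has modulus < 1 whenever |q - 5/4| < 3/4 (squaring maps the disc
   |s - 1| < 1 onto a region containing |p - 3/2| < 3/2).  Composing it with z f'(z)/f(z)
   gives the Schwarz function, so f is in S*_car as soon as z f'/f is holomorphic with values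
   in that disc.  For S*[c,0] with |c| <= 1/2 the values lie in |q - 1| < 1/2, inside the disc;
   for S*[a,-a] with |a| <= 1/3 they lie in the image of |u| < 1/3 under (1 + u)/(1 - u),
   which is exactly the disc. *)
theory Submission
  imports Defs
begin

lemma norm_csqrt_sub_1_less:
  assumes "cmod (p - 3/2) < 3/2"
  shows "cmod (csqrt p - 1) < 1"
proof -
  define s where "s = csqrt p"
  define x y where "x = Re s" and "y = Im s"
  have "x \<ge> 0"
    unfolding x_def s_def by (rule Re_csqrt)
  have "(cmod (p - 3/2))\<^sup>2 = (x\<^sup>2 + y\<^sup>2)\<^sup>2 - 3 * (x\<^sup>2 - y\<^sup>2) + 9/4"
    unfolding cmod_power2 x_def y_def
    by (simp add: s_def [symmetric] power2_csqrt [of p, folded s_def, symmetric] power2_eq_square algebra_simps)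
  moreover have "(cmod (p - 3/2))\<^sup>2 < (3/2)\<^sup>2"
    using assms by (simp add: power_strict_mono)
  ultimately have "(x\<^sup>2 + y\<^sup>2)\<^sup>2 < 3 * (x\<^sup>2 - y\<^sup>2)"
    by (simp add: power2_eq_square)
  also have "\<dots> \<le> (2 * x)\<^sup>2"
    by (simp add: power_mult_distrib) (smt (verit) zero_le_power2)
  finally have "x\<^sup>2 + y\<^sup>2 < 2 * x"
    by (rule power_less_imp_less_base) (use \<open>x \<ge> 0\<close> in simp)
  then have "(Re (s - 1))\<^sup>2 + (Im (s - 1))\<^sup>2 < 1"
    by (simp add: x_def y_def power2_eq_square algebra_simps)
  then show ?thesis
    by (simp add: s_def cmod_def)
qed

lemma cayley_third_in_ball:
  assumes "cmod u < 1/3"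
  shows "(1 + u) / (1 - u) \<in> ball (5/4) (3/4)"
proof -
  have "1 - u \<noteq> 0"
    using assms by auto
  have "(cmod (1 - 9 * u))\<^sup>2 < (3 * cmod (1 - u))\<^sup>2"
  proof -
    have "(Re u)\<^sup>2 + (Im u)\<^sup>2 < (1/3)\<^sup>2"
      using assms by (simp add: cmod_power2 [symmetric] power_strict_mono)
    moreover have "(cmod (1 - 9 * u))\<^sup>2 = (1 - 9 * Re u)\<^sup>2 + (9 * Im u)\<^sup>2"
      and "(3 * cmod (1 - u))\<^sup>2 = 9 * ((1 - Re u)\<^sup>2 + (Im u)\<^sup>2)"
      by (simp_all add: cmod_power2 power_mult_distrib)
    ultimately show ?thesis
      by (simp add: power2_eq_square algebra_simps)
  qed
  then have "cmod (1 - 9 * u) < 3 * cmod (1 - u)"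
    by (rule power_less_imp_less_base) simp
  moreover have "5/4 - (1 + u) / (1 - u) = (1 - 9 * u) / (4 * (1 - u))"
    using \<open>1 - u \<noteq> 0\<close> by (simp add: field_simps)
  then have "dist (5/4) ((1 + u) / (1 - u)) = cmod (1 - 9 * u) / (4 * cmod (1 - u))"
    unfolding dist_norm by (simp only: norm_divide norm_mult) simp
  moreover have "cmod (1 - u) > 0"
    using \<open>1 - u \<noteq> 0\<close> by simp
  ultimately show ?thesis
    by (simp add: pos_divide_less_eq)
qed

lemma in_ball_if_norm_sub_1_less:
  assumes "cmod (q - 1) < 1/2"
  shows "q \<in> ball (5/4) (3/4)"
  using assms dist_triangle [of "5/4" q 1] by (simp add: dist_norm norm_minus_commute)

lemma cayley_inverse_third_in_ball:
  assumes "q \<noteq> -1" and "cmod ((q - 1) / (q + 1)) < 1/3"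
  shows "q \<in> ball (5/4) (3/4)"
proof -
  define u where "u = (q - 1) / (q + 1)"
  have "q + 1 \<noteq> 0"
    using assms(1) by (simp add: add_eq_0_iff2)
  then have "q = (1 + u) / (1 - u)"
    by (simp add: u_def divide_simps)
  moreover have "cmod u < 1/3"
    using assms(2) by (simp add: u_def)
  ultimately show ?thesis
    using cayley_third_in_ball by simp
qed

lemma subordinate_cardioid_if_in_ball:
  assumes hol: "g holomorphic_on unit_disc" and "g 0 = 1"
    and in_ball: "\<And>z. z \<in> unit_disc \<Longrightarrow> g z \<in> ball (5/4) (3/4)"
  shows "subordinate g (\<lambda>z. 1 + z + z\<^sup>2 / 2)"
  unfolding subordinate_def
proof (intro exI [of _ "\<lambda>z. csqrt (2 * g z - 1) - 1"] conjI ballI)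
  have near: "cmod (2 * g z - 1 - 3/2) < 3/2" if "z \<in> unit_disc" for z
  proof -
    have "2 * g z - 1 - 3/2 = 2 * (g z - 5/4)"
      by simp
    moreover have "cmod (2 * (g z - 5/4)) < 3/2"
      using in_ball [OF that] unfolding norm_mult by (simp add: dist_norm norm_minus_commute)
    ultimately show ?thesis
      by (simp only:)
  qed
  have "2 * g z - 1 \<notin> \<real>\<^sub>\<le>\<^sub>0" if "z \<in> unit_disc" for z
    using abs_Re_le_cmod [of "2 * g z - 1 - 3/2"] near [OF that]
    by (auto simp: complex_nonpos_Reals_iff)
  then show "(\<lambda>z. csqrt (2 * g z - 1) - 1) holomorphic_on unit_disc"
    by (intro holomorphic_intros hol) auto
  show "(\<lambda>z. csqrt (2 * g z - 1) - 1) ` unit_disc \<subseteq> unit_disc"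
    using norm_csqrt_sub_1_less near by (auto simp: unit_disc_def)
  show "csqrt (2 * g 0 - 1) - 1 = 0"
    using \<open>g 0 = 1\<close> by simp
  fix z
  define s where "s = csqrt (2 * g z - 1)"
  have "s\<^sup>2 = 2 * g z - 1"
    by (simp add: s_def)
  moreover have "1 + (s - 1) + (s - 1)\<^sup>2 / 2 = (s\<^sup>2 + 1) / 2"
    by (simp add: field_simps power2_eq_square)
  ultimately show "g z = 1 + (s - 1) + (s - 1)\<^sup>2 / 2"
    by simp
qed

lemma subordinate_holomorphic:
  assumes "subordinate F G" and "G holomorphic_on unit_disc"
  shows "F holomorphic_on unit_disc" and "F ` unit_disc \<subseteq> G ` unit_disc"
proof -
  obtain w where "w holomorphic_on unit_disc" and w_maps: "w ` unit_disc \<subseteq> unit_disc"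
    and F_eq: "\<And>z. z \<in> unit_disc \<Longrightarrow> F z = G (w z)"
    using assms(1) unfolding subordinate_def by blast
  have "(G \<circ> w) holomorphic_on unit_disc"
    using \<open>w holomorphic_on unit_disc\<close> assms(2) w_maps by (rule holomorphic_on_compose_gen)
  then show "F holomorphic_on unit_disc"
    by (rule holomorphic_transform) (simp add: F_eq)
  show "F ` unit_disc \<subseteq> G ` unit_disc"
    using w_maps F_eq by auto
qed

lemma moebius_holomorphic_on_unit_disc:
  assumes "\<bar>B\<bar> \<le> 1"
  shows "(\<lambda>z. (1 + of_real A * z) / (1 + of_real B * z)) holomorphic_on unit_disc"
proof (intro holomorphic_intros)
  fix z :: complex
  assume "z \<in> unit_disc"
  then have "\<bar>B\<bar> * cmod z < 1"
    using assms mult_left_le_one_le [of "cmod z" "\<bar>B\<bar>"] by (simp add: unit_disc_def)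
  then have "cmod (of_real B * z) < 1"
    by (simp add: norm_mult)
  then show "1 + of_real B * z \<noteq> 0"
    by (metis add.inverse_unique norm_minus_cancel norm_one order.irrefl)
qed

lemma zfq_S_AB:
  assumes "f \<in> S_AB A B" and "\<bar>B\<bar> \<le> 1"
  shows "zfq f holomorphic_on unit_disc"
    and "zfq f ` unit_disc \<subseteq> (\<lambda>z. (1 + of_real A * z) / (1 + of_real B * z)) ` unit_disc"
  using assms subordinate_holomorphic moebius_holomorphic_on_unit_disc
  unfolding S_AB_def by auto

lemma zfq_holomorphic_on_unit_disc:
  assumes "f \<in> class_A" and nonzero: "\<And>z. z \<in> unit_disc \<Longrightarrow> z \<noteq> 0 \<Longrightarrow> f z \<noteq> 0"
  shows "zfq f holomorphic_on unit_disc"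
proof (rule no_isolated_singularity' [where K = "{0}"])
  have hol: "f holomorphic_on unit_disc" and "f 0 = 0" and "deriv f 0 = 1"
    using assms(1) by (auto simp: class_A_def)
  have "open unit_disc" and "0 \<in> unit_disc"
    by (simp_all add: unit_disc_def)
  have hol': "deriv f holomorphic_on unit_disc"
    using hol \<open>open unit_disc\<close> by (rule holomorphic_deriv)
  have "(\<lambda>z. z * deriv f z / f z) holomorphic_on unit_disc - {0}"
    using nonzero
    by (intro holomorphic_intros holomorphic_on_subset [OF hol] holomorphic_on_subset [OF hol']) auto
  then show "zfq f holomorphic_on unit_disc - {0}"
    by (rule holomorphic_transform) (simp add: zfq_def)
  have "(f has_field_derivative 1) (at 0)"
    using \<open>deriv f 0 = 1\<close> holomorphic_on_imp_differentiable_at [OF hol \<open>open unit_disc\<close> \<open>0 \<in> unit_disc\<close>]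
    by (metis DERIV_deriv_iff_field_differentiable)
  then have "((\<lambda>z. f z / z) \<longlongrightarrow> 1) (at 0)"
    using \<open>f 0 = 0\<close> by (simp add: has_field_derivative_iff)
  moreover have "(deriv f \<longlongrightarrow> 1) (at 0)"
    using \<open>deriv f 0 = 1\<close> holomorphic_on_imp_continuous_on [OF hol'] \<open>open unit_disc\<close> \<open>0 \<in> unit_disc\<close>
    by (metis continuous_on_eq_continuous_at isCont_def)
  ultimately have "((\<lambda>z. deriv f z / (f z / z)) \<longlongrightarrow> 1) (at 0)"
    using tendsto_divide by fastforce
  moreover have "\<forall>\<^sub>F z in at 0. deriv f z / (f z / z) = zfq f z"
    by (auto simp: eventually_at_filter zfq_def)
  ultimately have "(zfq f \<longlongrightarrow> 1) (at 0)"
    by (rule Lim_transform_eventually)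
  then show "(zfq f \<longlongrightarrow> zfq f z) (at z within unit_disc)" if "z \<in> {0}" for z
    using that by (auto simp: zfq_def intro: tendsto_within_subset)
qed (simp_all add: unit_disc_def)

lemma S_car_if_zfq_in_ball:
  assumes "f \<in> class_A" and "zfq f holomorphic_on unit_disc"
    and "\<And>z. z \<in> unit_disc \<Longrightarrow> zfq f z \<in> ball (5/4) (3/4)"
  shows "f \<in> S_car"
  using assms subordinate_cardioid_if_in_ball [of "zfq f"] by (simp add: S_car_def zfq_def)

lemma S_AB_0_subset_S_car:
  assumes "\<bar>c\<bar> \<le> 1/2"
  shows "S_AB c 0 \<subseteq> S_car"
proof
  fix f
  assume f: "f \<in> S_AB c 0"
  have "zfq f z \<in> ball (5/4) (3/4)" if "z \<in> unit_disc" for z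
  proof -
    obtain w where "cmod w < 1" and "zfq f z = 1 + of_real c * w"
      using zfq_S_AB(2) [OF f] \<open>z \<in> unit_disc\<close> by (fastforce simp: unit_disc_def)
    moreover have "\<bar>c\<bar> * cmod w \<le> 1/2 * cmod w"
      using assms by (intro mult_right_mono) auto
    with \<open>cmod w < 1\<close> have "cmod (of_real c * w) < 1/2"
      by (simp add: norm_mult)
    ultimately show ?thesis
      using in_ball_if_norm_sub_1_less by simp
  qed
  then show "f \<in> S_car"
    using S_car_if_zfq_in_ball f zfq_S_AB(1) [OF f] by (simp add: S_AB_def)
qed

lemma S_AB_symmetric_subset_S_car:
  assumes "\<bar>a\<bar> \<le> 1/3"
  shows "S_AB a (-a) \<subseteq> S_car"
proof
  fix f
  assume f: "f \<in> S_AB a (-a)"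
  have "\<bar>-a\<bar> \<le> 1"
    using assms by simp
  have "zfq f z \<in> ball (5/4) (3/4)" if "z \<in> unit_disc" for z
  proof -
    obtain w where "cmod w < 1" and "zfq f z = (1 + of_real a * w) / (1 - of_real a * w)"
      using zfq_S_AB(2) [OF f \<open>\<bar>-a\<bar> \<le> 1\<close>] \<open>z \<in> unit_disc\<close> by (fastforce simp: unit_disc_def)
    moreover have "\<bar>a\<bar> * cmod w \<le> 1/3 * cmod w"
      using assms by (intro mult_right_mono) auto
    with \<open>cmod w < 1\<close> have "cmod (of_real a * w) < 1/3"
      by (simp add: norm_mult)
    ultimately show ?thesis
      using cayley_third_in_ball by simp
  qed
  then show "f \<in> S_car"
    using S_car_if_zfq_in_ball f zfq_S_AB(1) [OF f \<open>\<bar>-a\<bar> \<le> 1\<close>] by (simp add: S_AB_def)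
qed

lemma ne_minus_one_if_cayley_bounded:
  assumes "connected S" and "continuous_on S g" and "a \<in> S" and "g a = 1"
    and bounded: "\<And>z. z \<in> S \<Longrightarrow> cmod ((g z - 1) / (g z + 1)) < 1"
    and "z \<in> S"
  shows "g z \<noteq> -1"
proof
  assume "g z = -1"
  let ?h = "\<lambda>z. cmod (g z + 1)"
  have "connected (?h ` S)"
    using assms(2,1) by (intro connected_continuous_image continuous_intros)
  moreover have "0 \<in> ?h ` S" and "2 \<in> ?h ` S"
    using \<open>g z = -1\<close> \<open>z \<in> S\<close> \<open>g a = 1\<close> \<open>a \<in> S\<close> by (force intro: image_eqI)+
  ultimately have "1 \<in> ?h ` S"
    by (rule connectedD_interval) simp_all
  then obtain b where "b \<in> S" and "cmod (g b + 1) = 1"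
    by auto
  then have "cmod (g b - 1) < 1"
    using bounded [of b] by (simp add: norm_divide)
  moreover have "2 \<le> cmod (g b + 1) + cmod (g b - 1)"
    using norm_triangle_ineq4 [of "g b + 1" "g b - 1"] by simp
  ultimately show False
    using \<open>cmod (g b + 1) = 1\<close> by simp
qed

lemma S_car_if_norm_zfq_sub_1_less:
  assumes "f \<in> class_A" and near: "\<forall>z\<in>unit_disc. cmod (zfq f z - 1) < 1/2"
  shows "f \<in> S_car"
proof (rule S_car_if_zfq_in_ball [OF assms(1)])
  \<comment> \<open>At a zero z \<noteq> 0 of f, zfq f z = 0 (division by zero), violating the hypothesis.\<close>
  show "zfq f holomorphic_on unit_disc"
    using near by (intro zfq_holomorphic_on_unit_disc [OF assms(1)]) (force simp: zfq_def)
  show "zfq f z \<in> ball (5/4) (3/4)" if "z \<in> unit_disc" for z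
    using near that in_ball_if_norm_sub_1_less by blast
qed

lemma S_car_if_norm_zfq_cayley_less:
  assumes "f \<in> class_A" and small: "\<forall>z\<in>unit_disc. cmod ((zfq f z - 1) / (zfq f z + 1)) < 1/3"
  shows "f \<in> S_car"
proof (rule S_car_if_zfq_in_ball [OF assms(1)])
  show hol: "zfq f holomorphic_on unit_disc"
    using small by (intro zfq_holomorphic_on_unit_disc [OF assms(1)]) (force simp: zfq_def)
  fix z
  assume "z \<in> unit_disc"
  \<comment> \<open>Division by zero makes the hypothesis hold where zfq f = -1; connectedness excludes that value.\<close>
  have "zfq f z \<noteq> -1"
  proof (rule ne_minus_one_if_cayley_bounded [where S = unit_disc and g = "zfq f" and a = 0])
    show "continuous_on unit_disc (zfq f)"
      using hol by (rule holomorphic_on_imp_continuous_on)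
    show "cmod ((zfq f w - 1) / (zfq f w + 1)) < 1" if "w \<in> unit_disc" for w
      using small that by fastforce
  qed (use \<open>z \<in> unit_disc\<close> in \<open>auto simp: unit_disc_def zfq_def\<close>)
  then show "zfq f z \<in> ball (5/4) (3/4)"
    using small \<open>z \<in> unit_disc\<close> cayley_inverse_third_in_ball by blast
qed

theorem corollary3p2:
  shows "(\<forall>\<alpha>::real. 1/2 \<le> \<alpha> \<and> \<alpha> < 1 \<longrightarrow> S_AB (1 - \<alpha>) 0 \<subseteq> S_car)
    \<and> (\<forall>\<alpha>::real. 0 < \<alpha> \<and> \<alpha> \<le> 1/3 \<longrightarrow> S_AB \<alpha> (-\<alpha>) \<subseteq> S_car)
    \<and> (\<forall>f \<in> class_A.
          ((\<forall>z\<in>unit_disc. cmod (zfq f z - 1) < 1/2)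
           \<or> (\<forall>z\<in>unit_disc. cmod ((zfq f z - 1) / (zfq f z + 1)) < 1/3))
          \<longrightarrow> f \<in> S_car)"
proof (intro conjI allI impI ballI)
  fix \<alpha> :: real
  assume "1/2 \<le> \<alpha> \<and> \<alpha> < 1"
  then show "S_AB (1 - \<alpha>) 0 \<subseteq> S_car"
    by (intro S_AB_0_subset_S_car) simp
next
  fix \<alpha> :: real
  assume "0 < \<alpha> \<and> \<alpha> \<le> 1/3"
  then show "S_AB \<alpha> (-\<alpha>) \<subseteq> S_car"
    by (intro S_AB_symmetric_subset_S_car) simp
next
  fix f
  assume "f \<in> class_A"
    and "(\<forall>z\<in>unit_disc. cmod (zfq f z - 1) < 1/2)
      \<or> (\<forall>z\<in>unit_disc. cmod ((zfq f z - 1) / (zfq f z + 1)) < 1/3)"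
  then show "f \<in> S_car"
    using S_car_if_norm_zfq_sub_1_less S_car_if_norm_zfq_cayley_less by blast
qed

end
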